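(* Let $\lvert\psi\rangle\in(\mathbb{C}^d)^{\otimes n}$ be a unit vector with recursive Schmidt decomposition $\lvert\psi\rangle=\sum_{i=1}^{d^{n-1}}\sqrt{p_i}\,\lvert\phi_i\rangle$, where $p_i\ge0$, $\sum_ip_i=1$, and $\{\lvert\phi_i\rangle\}_{i=1}^{d^{n-1}}$ is a set of orthonormal product vectors in $(\mathbb{C}^d)^{\otimes n}$. Define $\rho:=\sum_{i=1}^{d^{n-1}}p_i\lvert\phi_i\rangle\langle\phi_i\rvert$. Then for every projector $\Pi$ acting on some subset $\mathcal{S}\subseteq\{1,\ldots,n\}$ of qudits with $|\mathcal{S}|=k$ (i.e. a projector on the qudits in $\mathcal{S}$ tensored with the identity on the rest), $\mathrm{Tr}(\Pi\rho)\ge\frac{1}{d^{k-1}}\mathrm{Tr}(\Pi\lvert\psi\rangle\langle\psi\rvert)$.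
   Context: Recursive Schmidt decomposition (RSD) of $\lvert\psi\rangle\in(\mathbb{C}^d)^{\otimes n}$ (with respect to the fixed qudit order $1,\ldots,n$): first write the Schmidt decomposition of $\lvert\psi\rangle$ across qudit $1$ versus qudits $2,\ldots,n$, $\lvert\psi\rangle=\sum_{i=1}^d\alpha_i\lvert w_i\rangle\lvert v_i\rangle$ (with $\alpha_i\ge 0$ and orthonormal $\{\lvert w_i\rangle\}$, $\{\lvert v_i\rangle\}$); then recursively replace each $\lvert v_i\rangle\in(\mathbb{C}^d)^{\otimes n-1}$ by its own Schmidt decomposition across its first qudit (qudit $2$) versus the remaining qudits, and so on, through qudit $n-1$. Expanding gives an expression $\lvert\psi\rangle=\sum_{i=1}^{d^{n-1}}\sqrt{p_i}\lvert\phi_i\rangle$ with each $\lvert\phi_i\rangle$ a tensor product of single-qudit vectors and $\sqrt{p_i}$ the product of the corresponding Schmidt coefficients. *)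

theory Defs
  imports Complex_Main "HOL-Library.FuncSet" "HOL-Library.Complex_Order"
begin

text \<open>Vectors in (C^d)^{tensor n} are functions on index lists (x_1,...,x_n), x_i < d.
  Qudits are numbered 0,...,n-1 (list positions). Single-qudit vectors are functions nat => complex
  on {..<d}.\<close>

definition basis :: "nat \<Rightarrow> nat \<Rightarrow> nat list set" where
  "basis d n = {xs. length xs = n \<and> (\<forall>x\<in>set xs. x < d)}"

definition inner_n :: "nat \<Rightarrow> nat \<Rightarrow> (nat list \<Rightarrow> complex) \<Rightarrow> (nat list \<Rightarrow> complex) \<Rightarrow> complex" where
  "inner_n d n u v = (\<Sum>xs\<in>basis d n. cnj (u xs) * v xs)"

definition inner1 :: "nat \<Rightarrow> (nat \<Rightarrow> complex) \<Rightarrow> (nat \<Rightarrow> complex) \<Rightarrow> complex" where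
  "inner1 d a b = (\<Sum>x<d. cnj (a x) * b x)"

definition orthonormal1 :: "nat \<Rightarrow> (nat \<Rightarrow> nat \<Rightarrow> complex) \<Rightarrow> bool" where
  "orthonormal1 d w = (\<forall>i<d. \<forall>j<d. inner1 d (w i) (w j) = (if i = j then 1 else 0))"

definition orthonormal_n :: "nat \<Rightarrow> nat \<Rightarrow> (nat \<Rightarrow> nat list \<Rightarrow> complex) \<Rightarrow> bool" where
  "orthonormal_n d n v = (\<forall>i<d. \<forall>j<d. inner_n d n (v i) (v j) = (if i = j then 1 else 0))"

definition tensor :: "(nat \<Rightarrow> complex) \<Rightarrow> (nat list \<Rightarrow> complex) \<Rightarrow> nat list \<Rightarrow> complex" where
  "tensor w v xs = (case xs of [] \<Rightarrow> 0 | x # ys \<Rightarrow> w x * v ys)"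

text \<open>rsd d n psi c phi: the terms indexed by i in basis d (n-1) with coefficient c i = sqrt p_i
  (product of Schmidt coefficients) and product vector phi i form a recursive Schmidt
  decomposition of psi in (C^d)^{tensor n}.\<close>
inductive rsd :: "nat \<Rightarrow> nat \<Rightarrow> (nat list \<Rightarrow> complex) \<Rightarrow> (nat list \<Rightarrow> real)
                   \<Rightarrow> (nat list \<Rightarrow> nat list \<Rightarrow> complex) \<Rightarrow> bool" for d where
  base: "c [] = 1 \<Longrightarrow> \<phi> [] = v \<Longrightarrow> rsd d (Suc 0) v c \<phi>"
| step: "\<lbrakk> n \<ge> 1;
          \<forall>j<d. \<alpha> j \<ge> 0;
          orthonormal1 d w;
          orthonormal_n d n v;
          \<forall>xs\<in>basis d (Suc n). \<psi> xs = (\<Sum>j<d. complex_of_real (\<alpha> j) * tensor (w j) (v j) xs);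
          \<forall>j<d. rsd d n (v j) (cs j) (\<phi>s j);
          \<forall>j<d. \<forall>is\<in>basis d (n - 1). c (j # is) = \<alpha> j * cs j is \<and> \<phi> (j # is) = tensor (w j) (\<phi>s j is) \<rbrakk>
         \<Longrightarrow> rsd d (Suc n) \<psi> c \<phi>"

text \<open>Operators on (C^d)^{tensor n} as kernels on basis indices.\<close>
definition ketbra :: "(nat list \<Rightarrow> complex) \<Rightarrow> (nat list \<Rightarrow> complex) \<Rightarrow> nat list \<Rightarrow> nat list \<Rightarrow> complex" where
  "ketbra u v = (\<lambda>x y. u x * cnj (v y))"

definition rsd_mixture :: "nat \<Rightarrow> nat \<Rightarrow> (nat list \<Rightarrow> real) \<Rightarrow> (nat list \<Rightarrow> nat list \<Rightarrow> complex)
                           \<Rightarrow> nat list \<Rightarrow> nat list \<Rightarrow> complex" where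
  "rsd_mixture d n c \<phi> = (\<lambda>x y. \<Sum>i\<in>basis d (n - 1). complex_of_real ((c i)\<^sup>2) * ketbra (\<phi> i) (\<phi> i) x y)"

definition trace_prod :: "nat \<Rightarrow> nat \<Rightarrow> (nat list \<Rightarrow> nat list \<Rightarrow> complex) \<Rightarrow> (nat list \<Rightarrow> nat list \<Rightarrow> complex) \<Rightarrow> complex" where
  "trace_prod d n A B = (\<Sum>x\<in>basis d n. \<Sum>y\<in>basis d n. A x y * B y x)"

text \<open>Local basis of the qudits in S: functions S -> {..<d}.\<close>
definition loc :: "nat set \<Rightarrow> nat list \<Rightarrow> nat \<Rightarrow> nat" where
  "loc S xs = restrict (\<lambda>i. xs ! i) S"

definition local_projector :: "nat \<Rightarrow> nat set \<Rightarrow> ((nat \<Rightarrow> nat) \<Rightarrow> (nat \<Rightarrow> nat) \<Rightarrow> complex) \<Rightarrow> bool" where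
  "local_projector d S Q =
     ((\<forall>a\<in>PiE S (\<lambda>_. {..<d}). \<forall>b\<in>PiE S (\<lambda>_. {..<d}). Q a b = cnj (Q b a)) \<and>
      (\<forall>a\<in>PiE S (\<lambda>_. {..<d}). \<forall>b\<in>PiE S (\<lambda>_. {..<d}).
          (\<Sum>e\<in>PiE S (\<lambda>_. {..<d}). Q a e * Q e b) = Q a b))"

definition embed_op :: "nat \<Rightarrow> nat set \<Rightarrow> ((nat \<Rightarrow> nat) \<Rightarrow> (nat \<Rightarrow> nat) \<Rightarrow> complex)
                        \<Rightarrow> nat list \<Rightarrow> nat list \<Rightarrow> complex" where
  "embed_op n S Q = (\<lambda>x y. Q (loc S x) (loc S y) * (if \<forall>i\<in>{..<n} - S. x ! i = y ! i then 1 else 0))"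

end

theory Submission
  imports Defs
begin

text \<open>
  We prove the bound for every positive semidefinite operator acting on the qudits in \<open>S\<close>,
  by induction along the recursive Schmidt decomposition
  \<open>\<psi> = \<Sum>\<^sub>j \<alpha>\<^sub>j w\<^sub>j \<otimes> v\<^sub>j\<close>.
  If the first qudit is not in \<open>S\<close>, the operator is \<open>1 \<otimes> \<Pi>'\<close> and the cross terms
  vanish by orthogonality of the \<open>w\<^sub>j\<close>. If it is, the pinching inequality
  \<open>\<langle>\<psi>|\<Pi>|\<psi>\<rangle> \<le> d \<Sum>\<^sub>j \<alpha>\<^sub>j\<^sup>2 \<langle>w\<^sub>j v\<^sub>j|\<Pi>|w\<^sub>j v\<^sub>j\<rangle>\<close>
  costs one factor \<open>d\<close>, and each term is \<open>\<langle>v\<^sub>j|\<Pi>\<^sub>j|v\<^sub>j\<rangle>\<close> for the positive operator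
  \<open>\<Pi>\<^sub>j = (\<langle>w\<^sub>j| \<otimes> 1) \<Pi> (|w\<^sub>j\<rangle> \<otimes> 1)\<close> on the remaining \<open>k - 1\<close> qudits of \<open>S\<close>.
  When \<open>S\<close> is the first qudit alone, \<open>\<Pi>\<^sub>j\<close> is a scalar and orthogonality of the \<open>v\<^sub>j\<close>
  avoids the loss, which is why the exponent is \<open>k - 1\<close> rather than \<open>k\<close>.
\<close>

lemma finite_basis: "finite (basis d n)"
proof -
  have "basis d n \<subseteq> {xs. set xs \<subseteq> {..<d} \<and> length xs = n}"
    unfolding basis_def by auto
  moreover have "finite {xs. set xs \<subseteq> {..<d} \<and> length xs = n}"
    by (rule finite_lists_length_eq) auto
  ultimately show ?thesis
    by (rule finite_subset)
qed

lemma basis_0: "basis d 0 = {[]}"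
  unfolding basis_def by auto

lemma basis_Suc: "basis d (Suc n) = (\<lambda>(a, ys). a # ys) ` ({..<d} \<times> basis d n)"
proof (rule set_eqI)
  fix xs
  show "xs \<in> basis d (Suc n) \<longleftrightarrow> xs \<in> (\<lambda>(a, ys). a # ys) ` ({..<d} \<times> basis d n)"
    unfolding basis_def by (cases xs) (auto simp: image_iff)
qed

lemma sum_basis_Suc: "(\<Sum>x\<in>basis d (Suc n). f x) = (\<Sum>a<d. \<Sum>ys\<in>basis d n. f (a # ys))"
proof -
  have "inj_on (\<lambda>(a, ys). a # ys) ({..<d} \<times> basis d n)"
    by (auto simp: inj_on_def)
  then have "(\<Sum>x\<in>basis d (Suc n). f x) = (\<Sum>(a, ys)\<in>{..<d} \<times> basis d n. f (a # ys))"
    unfolding basis_Suc by (simp add: sum.reindex case_prod_unfold)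
  then show ?thesis
    by (simp add: sum.cartesian_product)
qed

definition sesq_form :: "nat \<Rightarrow> nat \<Rightarrow> (nat list \<Rightarrow> nat list \<Rightarrow> complex)
    \<Rightarrow> (nat list \<Rightarrow> complex) \<Rightarrow> (nat list \<Rightarrow> complex) \<Rightarrow> complex" where
  "sesq_form d n K u v = (\<Sum>x\<in>basis d n. \<Sum>y\<in>basis d n. cnj (u x) * K x y * v y)"

definition psd_kernel :: "nat \<Rightarrow> nat \<Rightarrow> (nat list \<Rightarrow> nat list \<Rightarrow> complex) \<Rightarrow> bool" where
  "psd_kernel d n K \<longleftrightarrow> (\<forall>u. 0 \<le> sesq_form d n K u u)"

lemma sesq_form_cong:
  "(\<And>x. x \<in> basis d n \<Longrightarrow> u x = u' x) \<Longrightarrow> (\<And>x. x \<in> basis d n \<Longrightarrow> v x = v' x)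
    \<Longrightarrow> sesq_form d n K u v = sesq_form d n K u' v'"
  unfolding sesq_form_def by (intro sum.cong refl) auto

lemma sesq_form_sum_left:
  "sesq_form d n K (\<lambda>x. \<Sum>j\<in>J. f j x) v = (\<Sum>j\<in>J. sesq_form d n K (f j) v)"
  unfolding sesq_form_def cnj_sum sum_distrib_right
  by (subst sum.swap) (simp add: sum.swap[of _ J])

lemma sesq_form_sum_right:
  "sesq_form d n K u (\<lambda>y. \<Sum>j\<in>J. g j y) = (\<Sum>j\<in>J. sesq_form d n K u (g j))"
  unfolding sesq_form_def sum_distrib_left
  by (subst sum.swap) (simp add: sum.swap[of _ J])

lemma sesq_form_scale:
  "sesq_form d n K (\<lambda>x. a * u x) (\<lambda>y. b * v y) = cnj a * b * sesq_form d n K u v"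
  unfolding sesq_form_def sum_distrib_left by (simp add: mult_ac)

lemma sesq_form_diff:
  "sesq_form d n K (\<lambda>x. u x - v x) (\<lambda>x. u x - v x)
    = sesq_form d n K u u - sesq_form d n K u v - sesq_form d n K v u + sesq_form d n K v v"
  unfolding sesq_form_def by (simp add: algebra_simps sum.distrib sum_subtractf)

lemma sesq_form_kernel_sum:
  "sesq_form d n (\<lambda>x y. \<Sum>a\<in>A. K a x y) u v = (\<Sum>a\<in>A. sesq_form d n (K a) u v)"
  unfolding sesq_form_def sum_distrib_left sum_distrib_right
  by (subst sum.swap) (simp add: sum.swap[of _ A])

lemma sesq_form_kernel_scale:
  "sesq_form d n (\<lambda>x y. c * K x y) u v = c * sesq_form d n K u v"
  unfolding sesq_form_def sum_distrib_left by (simp add: mult_ac)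

lemma sesq_form_tensor:
  "sesq_form d (Suc n) K (tensor w u) (tensor w' v) =
    (\<Sum>a<d. \<Sum>b<d. cnj (w a) * w' b * sesq_form d n (\<lambda>ys zs. K (a # ys) (b # zs)) u v)"
proof -
  have "sesq_form d (Suc n) K (tensor w u) (tensor w' v) =
    (\<Sum>a<d. \<Sum>ys\<in>basis d n. \<Sum>b<d. \<Sum>zs\<in>basis d n.
       cnj (w a) * w' b * (cnj (u ys) * K (a # ys) (b # zs) * v zs))"
    unfolding sesq_form_def sum_basis_Suc tensor_def
    by (intro sum.cong refl) (simp add: sum_distrib_left mult_ac)
  also have "\<dots> = (\<Sum>a<d. \<Sum>b<d. \<Sum>ys\<in>basis d n. \<Sum>zs\<in>basis d n.
       cnj (w a) * w' b * (cnj (u ys) * K (a # ys) (b # zs) * v zs))"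
    by (intro sum.cong refl sum.swap)
  finally show ?thesis
    unfolding sesq_form_def by (simp only: sum_distrib_left)
qed

definition tail_qudits :: "nat set \<Rightarrow> nat set" where
  "tail_qudits S = {i. Suc i \<in> S}"

definition assign_Cons :: "nat set \<Rightarrow> nat \<Rightarrow> (nat \<Rightarrow> nat) \<Rightarrow> nat \<Rightarrow> nat" where
  "assign_Cons S a g = restrict (\<lambda>i. case i of 0 \<Rightarrow> a | Suc j \<Rightarrow> g j) S"

lemma tail_qudits_subset: "S \<subseteq> {..<Suc n} \<Longrightarrow> tail_qudits S \<subseteq> {..<n}"
  unfolding tail_qudits_def by auto

lemma card_tail_qudits:
  assumes "finite S"
  shows "card (tail_qudits S) = card (S - {0})"
proof -
  have "Suc ` tail_qudits S = S - {0}"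
    unfolding tail_qudits_def by (auto simp: image_iff) (metis not0_implies_Suc)
  then show ?thesis
    by (metis card_image inj_Suc inj_on_subset subset_UNIV)
qed

lemma loc_Cons: "loc S (a # ys) = assign_Cons S a (loc (tail_qudits S) ys)"
  unfolding loc_def assign_Cons_def tail_qudits_def
  by (rule ext) (auto simp: restrict_def nth_Cons split: nat.splits)

lemma assign_Cons_notin: "0 \<notin> S \<Longrightarrow> assign_Cons S a g = assign_Cons S b g"
  unfolding assign_Cons_def by (rule ext) (auto split: nat.splits)

lemma agree_Cons_iff:
  "(\<forall>i\<in>{..<Suc n} - S. (a # ys) ! i = (b # zs) ! i)
    \<longleftrightarrow> (0 \<in> S \<or> a = b) \<and> (\<forall>i\<in>{..<n} - tail_qudits S. ys ! i = zs ! i)"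
  (is "?agree \<longleftrightarrow> _")
proof
  assume agree: ?agree
  have "0 \<notin> S \<Longrightarrow> (a # ys) ! 0 = (b # zs) ! 0"
    using agree[rule_format, of 0] by simp
  moreover have "(a # ys) ! Suc i = (b # zs) ! Suc i" if "i \<in> {..<n} - tail_qudits S" for i
    using agree[rule_format, of "Suc i"] that unfolding tail_qudits_def by simp
  ultimately show "(0 \<in> S \<or> a = b) \<and> (\<forall>i\<in>{..<n} - tail_qudits S. ys ! i = zs ! i)"
    by auto
next
  assume "(0 \<in> S \<or> a = b) \<and> (\<forall>i\<in>{..<n} - tail_qudits S. ys ! i = zs ! i)"
  then show ?agree
    unfolding tail_qudits_def by (auto simp: nth_Cons split: nat.splits)
qed

lemma embed_op_Cons:
  "embed_op (Suc n) S Q (a # ys) (b # zs) =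
    (if 0 \<in> S \<or> a = b
     then embed_op n (tail_qudits S) (\<lambda>g h. Q (assign_Cons S a g) (assign_Cons S b h)) ys zs else 0)"
  unfolding embed_op_def agree_Cons_iff loc_Cons by simp

lemma embed_op_kernel_sum:
  "embed_op n S (\<lambda>g h. \<Sum>a\<in>A. Q a g h) = (\<lambda>x y. \<Sum>a\<in>A. embed_op n S (Q a) x y)"
  unfolding embed_op_def by (simp add: sum_distrib_right)

lemma embed_op_kernel_scale:
  "embed_op n S (\<lambda>g h. c * Q g h) = (\<lambda>x y. c * embed_op n S Q x y)"
  unfolding embed_op_def by (simp add: mult.assoc)

text \<open>\<open>(\<langle>w| \<otimes> 1) Q (|w'\<rangle> \<otimes> 1)\<close> as an operator on the qudits \<open>tail_qudits S\<close>; if qudit \<open>0\<close>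
  is outside \<open>S\<close>, the identity acts there and the contraction is \<open>\<langle>w|w'\<rangle>\<close>.\<close>
definition contract_first_qudit :: "nat \<Rightarrow> nat set \<Rightarrow> ((nat \<Rightarrow> nat) \<Rightarrow> (nat \<Rightarrow> nat) \<Rightarrow> complex)
    \<Rightarrow> (nat \<Rightarrow> complex) \<Rightarrow> (nat \<Rightarrow> complex) \<Rightarrow> (nat \<Rightarrow> nat) \<Rightarrow> (nat \<Rightarrow> nat) \<Rightarrow> complex" where
  "contract_first_qudit d S Q w w' g h =
    (if 0 \<in> S
     then \<Sum>a<d. \<Sum>b<d. cnj (w a) * w' b * Q (assign_Cons S a g) (assign_Cons S b h)
     else inner1 d w w' * Q (assign_Cons S 0 g) (assign_Cons S 0 h))"

lemma sesq_form_embed_op_tensor: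
  "sesq_form d (Suc n) (embed_op (Suc n) S Q) (tensor w u) (tensor w' v) =
    sesq_form d n (embed_op n (tail_qudits S) (contract_first_qudit d S Q w w')) u v"
proof (cases "0 \<in> S")
  case True
  then show ?thesis
    unfolding sesq_form_tensor embed_op_Cons contract_first_qudit_def
    by (simp add: embed_op_kernel_sum embed_op_kernel_scale sesq_form_kernel_sum sesq_form_kernel_scale)
next
  case False
  define Q0 where "Q0 g h = Q (assign_Cons S 0 g) (assign_Cons S 0 h)" for g h
  define E where "E = embed_op n (tail_qudits S) Q0"
  have "embed_op (Suc n) S Q (a # ys) (b # zs) = of_bool (a = b) * E ys zs" for a b ys zs
    using False unfolding embed_op_Cons Q0_def E_def by (simp add: assign_Cons_notin[OF False, of b _ 0])
  then have "sesq_form d (Suc n) (embed_op (Suc n) S Q) (tensor w u) (tensor w' v)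
      = (\<Sum>a<d. \<Sum>b<d. cnj (w a) * w' b * (of_bool (a = b) * sesq_form d n E u v))"
    unfolding sesq_form_tensor by (simp add: sesq_form_kernel_scale)
  also have "\<dots> = (\<Sum>a<d. \<Sum>b<d. if a = b then cnj (w a) * w' b * sesq_form d n E u v else 0)"
    by (intro sum.cong refl) simp
  also have "\<dots> = inner1 d w w' * sesq_form d n E u v"
    unfolding inner1_def by (simp add: sum_distrib_right)
  finally show ?thesis
    using False unfolding contract_first_qudit_def E_def Q0_def
    by (simp add: embed_op_kernel_scale sesq_form_kernel_scale)
qed

lemma sesq_form_embed_op_empty:
  "sesq_form d n (embed_op n {} Q) u v = Q (\<lambda>_. undefined) (\<lambda>_. undefined) * inner_n d n u v"
proof -
  have "embed_op n {} Q x y = of_bool (x = y) * Q (\<lambda>_. undefined) (\<lambda>_. undefined)"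
    if "x \<in> basis d n" "y \<in> basis d n" for x y
    using that unfolding embed_op_def loc_def basis_def by (auto simp: restrict_def intro: nth_equalityI)
  then have "sesq_form d n (embed_op n {} Q) u v
      = (\<Sum>x\<in>basis d n. \<Sum>y\<in>basis d n. of_bool (x = y) * (cnj (u x) * Q (\<lambda>_. undefined) (\<lambda>_. undefined) * v y))"
    unfolding sesq_form_def by (intro sum.cong refl) (simp add: mult_ac)
  also have "\<dots> = (\<Sum>x\<in>basis d n. \<Sum>y\<in>basis d n. if x = y then cnj (u x) * Q (\<lambda>_. undefined) (\<lambda>_. undefined) * v y else 0)"
    by (intro sum.cong refl) simp
  also have "\<dots> = Q (\<lambda>_. undefined) (\<lambda>_. undefined) * inner_n d n u v"
    unfolding inner_n_def by (simp add: finite_basis sum_distrib_left mult_ac)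
  finally show ?thesis .
qed

lemma sum_cnj_mult_same_fiber_nonneg:
  fixes A :: "'a \<Rightarrow> complex"
  assumes "finite X"
  shows "0 \<le> (\<Sum>x\<in>X. \<Sum>y\<in>X. cnj (A x) * of_bool (r x = r y) * A y)"
proof -
  define F where "F z = (\<Sum>y\<in>{y\<in>X. r y = z}. A y)" for z
  have "(\<Sum>y\<in>X. cnj (A x) * of_bool (r x = r y) * A y) = cnj (A x) * F (r x)" for x
  proof -
    have "(\<Sum>y\<in>X. cnj (A x) * of_bool (r x = r y) * A y)
        = (\<Sum>y\<in>X. if r y = r x then cnj (A x) * A y else 0)"
      by (intro sum.cong refl) auto
    then show ?thesis
      unfolding F_def sum_distrib_left by (simp add: sum.inter_filter assms)
  qed
  then have "(\<Sum>x\<in>X. \<Sum>y\<in>X. cnj (A x) * of_bool (r x = r y) * A y) = (\<Sum>x\<in>X. cnj (A x) * F (r x))"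
    by simp
  also have "\<dots> = (\<Sum>z\<in>r ` X. \<Sum>x\<in>{x\<in>X. r x = z}. cnj (A x) * F (r x))"
    by (rule sum.image_gen[OF assms])
  also have "\<dots> = (\<Sum>z\<in>r ` X. cnj (F z) * F z)"
    unfolding F_def by (intro sum.cong refl) (simp add: sum_distrib_right cnj_sum)
  also have "0 \<le> \<dots>"
    by (intro sum_nonneg) (simp add: less_eq_complex_def)
  finally show ?thesis .
qed

lemma local_projector_gram:
  assumes "local_projector d S Q"
    and "a \<in> PiE S (\<lambda>_. {..<d})" "b \<in> PiE S (\<lambda>_. {..<d})"
  shows "Q a b = (\<Sum>e\<in>PiE S (\<lambda>_. {..<d}). cnj (Q e a) * Q e b)"
proof -
  let ?P = "PiE S (\<lambda>_. {..<d})"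
  have herm: "\<And>x y. x \<in> ?P \<Longrightarrow> y \<in> ?P \<Longrightarrow> Q x y = cnj (Q y x)"
    and idem: "\<And>x y. x \<in> ?P \<Longrightarrow> y \<in> ?P \<Longrightarrow> (\<Sum>e\<in>?P. Q x e * Q e y) = Q x y"
    using assms(1) unfolding local_projector_def by blast+
  have "Q a b = (\<Sum>e\<in>?P. Q a e * Q e b)"
    using idem[OF assms(2,3)] by simp
  also have "\<dots> = (\<Sum>e\<in>?P. cnj (Q e a) * Q e b)"
    using herm[OF assms(2)] by (intro sum.cong refl) simp
  finally show ?thesis .
qed

lemma loc_in_PiE: "S \<subseteq> {..<n} \<Longrightarrow> x \<in> basis d n \<Longrightarrow> loc S x \<in> PiE S (\<lambda>_. {..<d})"
  unfolding loc_def basis_def by (auto simp: restrict_PiE_iff)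

lemma psd_kernel_embed_op:
  assumes "local_projector d S Q" and "S \<subseteq> {..<n}"
  shows "psd_kernel d n (embed_op n S Q)"
  unfolding psd_kernel_def
proof
  fix u
  define P where "P = PiE S (\<lambda>_. {..<d})"
  define r where "r x = restrict (\<lambda>i. x ! i) ({..<n} - S)" for x :: "nat list"
  define f where "f e x = Q e (loc S x) * u x" for e x
  have "finite P"
    unfolding P_def using assms(2) by (simp add: finite_PiE finite_subset)
  have agree: "(\<forall>i\<in>{..<n} - S. x ! i = y ! i) \<longleftrightarrow> r x = r y" for x y
    unfolding r_def by (metis restrict_apply' restrict_ext)
  have "cnj (u x) * embed_op n S Q x y * u y = (\<Sum>e\<in>P. cnj (f e x) * of_bool (r x = r y) * f e y)"
    if "x \<in> basis d n" "y \<in> basis d n" for x y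
    using local_projector_gram[OF assms(1) loc_in_PiE loc_in_PiE, OF assms(2) that(1) assms(2) that(2)]
    unfolding embed_op_def agree f_def P_def
    by (simp add: sum_distrib_left sum_distrib_right mult_ac)
  then have "sesq_form d n (embed_op n S Q) u u
      = (\<Sum>x\<in>basis d n. \<Sum>y\<in>basis d n. \<Sum>e\<in>P. cnj (f e x) * of_bool (r x = r y) * f e y)"
    unfolding sesq_form_def by (intro sum.cong refl) simp
  also have "\<dots> = (\<Sum>e\<in>P. \<Sum>x\<in>basis d n. \<Sum>y\<in>basis d n. cnj (f e x) * of_bool (r x = r y) * f e y)"
    by (subst sum.swap) (simp add: sum.swap[of _ P])
  also have "0 \<le> \<dots>"
    by (intro sum_nonneg sum_cnj_mult_same_fiber_nonneg finite_basis)
  finally show "0 \<le> sesq_form d n (embed_op n S Q) u u" .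
qed

lemma double_sum_le_card_mult_diagonal:
  fixes M :: "nat \<Rightarrow> nat \<Rightarrow> complex"
  assumes "\<And>j j'. j < m \<Longrightarrow> j' < m \<Longrightarrow> 0 \<le> M j j + M j' j' - M j j' - M j' j"
  shows "(\<Sum>j<m. \<Sum>j'<m. M j j') \<le> of_nat m * (\<Sum>j<m. M j j)"
proof -
  have "0 \<le> (\<Sum>j<m. \<Sum>j'<m. M j j + M j' j' - M j j' - M j' j)"
    by (intro sum_nonneg assms) simp_all
  also have "\<dots> = 2 * (of_nat m * (\<Sum>j<m. M j j) - (\<Sum>j<m. \<Sum>j'<m. M j j'))"
    using sum.swap[of "\<lambda>j j'. M j' j" "{..<m}" "{..<m}"]
    by (simp add: sum.distrib sum_subtractf sum_distrib_left algebra_simps)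
  finally show ?thesis
    by (simp add: less_eq_complex_def)
qed

lemma sesq_form_expand:
  assumes "\<forall>x\<in>basis d n. \<psi> x = (\<Sum>j\<in>J. of_real (a j) * t j x)"
  shows "sesq_form d n K \<psi> \<psi> = (\<Sum>j\<in>J. \<Sum>j'\<in>J. of_real (a j * a j') * sesq_form d n K (t j) (t j'))"
proof -
  have "sesq_form d n K \<psi> \<psi>
      = sesq_form d n K (\<lambda>x. \<Sum>j\<in>J. of_real (a j) * t j x) (\<lambda>y. \<Sum>j'\<in>J. of_real (a j') * t j' y)"
    using assms by (intro sesq_form_cong) auto
  then show ?thesis
    by (simp add: sesq_form_sum_left sesq_form_sum_right sesq_form_scale)
qed

lemma sesq_form_pinching:
  assumes "psd_kernel d n K"
    and "\<forall>x\<in>basis d n. \<psi> x = (\<Sum>j<m. of_real (a j) * t j x)"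
  shows "sesq_form d n K \<psi> \<psi> \<le> of_nat m * (\<Sum>j<m. of_real ((a j)\<^sup>2) * sesq_form d n K (t j) (t j))"
proof -
  let ?M = "\<lambda>j j'. of_real (a j * a j') * sesq_form d n K (t j) (t j')"
  have "?M j j + ?M j' j' - ?M j j' - ?M j' j
      = sesq_form d n K (\<lambda>x. of_real (a j) * t j x - of_real (a j') * t j' x)
                        (\<lambda>x. of_real (a j) * t j x - of_real (a j') * t j' x)" for j j'
    by (simp only: sesq_form_diff sesq_form_scale complex_cnj_complex_of_real of_real_mult) (simp add: algebra_simps)
  then have "sesq_form d n K \<psi> \<psi> \<le> of_nat m * (\<Sum>j<m. ?M j j)"
    unfolding sesq_form_expand[OF assms(2)]
    by (intro double_sum_le_card_mult_diagonal) (use assms(1) in \<open>simp add: psd_kernel_def\<close>)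
  then show ?thesis
    by (simp add: power2_eq_square)
qed

lemma sesq_form_orthogonal_expand:
  fixes m :: nat
  assumes "\<forall>x\<in>basis d n. \<psi> x = (\<Sum>j<m. of_real (a j) * t j x)"
    and "\<And>j j'. j < m \<Longrightarrow> j' < m \<Longrightarrow> j \<noteq> j' \<Longrightarrow> sesq_form d n K (t j) (t j') = 0"
  shows "sesq_form d n K \<psi> \<psi> = (\<Sum>j<m. of_real ((a j)\<^sup>2) * sesq_form d n K (t j) (t j))"
proof -
  have "(\<Sum>j'<m. of_real (a j * a j') * sesq_form d n K (t j) (t j'))
      = of_real ((a j)\<^sup>2) * sesq_form d n K (t j) (t j)" if "j < m" for j
  proof -
    have "(\<Sum>j'<m. of_real (a j * a j') * sesq_form d n K (t j) (t j'))
        = (\<Sum>j'<m. if j' = j then of_real (a j * a j') * sesq_form d n K (t j) (t j') else 0)"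
      using assms(2) that by (intro sum.cong refl) auto
    also have "\<dots> = of_real ((a j)\<^sup>2) * sesq_form d n K (t j) (t j)"
      using that by (subst sum.delta) (auto simp: power2_eq_square)
    finally show ?thesis .
  qed
  then show ?thesis
    unfolding sesq_form_expand[OF assms(1)] by simp
qed

definition mixture_form :: "nat \<Rightarrow> nat \<Rightarrow> (nat list \<Rightarrow> real) \<Rightarrow> (nat list \<Rightarrow> nat list \<Rightarrow> complex)
    \<Rightarrow> (nat list \<Rightarrow> nat list \<Rightarrow> complex) \<Rightarrow> complex" where
  "mixture_form d n c \<phi> K = (\<Sum>i\<in>basis d (n - 1). of_real ((c i)\<^sup>2) * sesq_form d n K (\<phi> i) (\<phi> i))"

lemma mixture_form_Suc:
  assumes "1 \<le> n"
    and "\<forall>j<d. \<forall>is\<in>basis d (n - 1). c (j # is) = \<alpha> j * cs j is \<and> \<phi> (j # is) = tensor (w j) (\<phi>s j is)"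
    and "\<And>j x y. j < d \<Longrightarrow> sesq_form d (Suc n) K (tensor (w j) x) (tensor (w j) y) = sesq_form d n (K' j) x y"
  shows "mixture_form d (Suc n) c \<phi> K = (\<Sum>j<d. of_real ((\<alpha> j)\<^sup>2) * mixture_form d n (cs j) (\<phi>s j) (K' j))"
proof -
  have Suc_pred: "Suc n - 1 = Suc (n - 1)"
    using assms(1) by simp
  have "mixture_form d (Suc n) c \<phi> K
      = (\<Sum>j<d. \<Sum>is\<in>basis d (n - 1). of_real ((c (j # is))\<^sup>2) * sesq_form d (Suc n) K (\<phi> (j # is)) (\<phi> (j # is)))"
    unfolding mixture_form_def Suc_pred sum_basis_Suc ..
  also have "\<dots> = (\<Sum>j<d. \<Sum>is\<in>basis d (n - 1). of_real ((\<alpha> j)\<^sup>2) *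
      (of_real ((cs j is)\<^sup>2) * sesq_form d n (K' j) (\<phi>s j is) (\<phi>s j is)))"
    using assms(2,3) by (intro sum.cong refl) (simp add: power_mult_distrib)
  finally show ?thesis
    unfolding mixture_form_def by (simp add: sum_distrib_left)
qed

lemma rsd_step_bound:
  fixes n :: nat and S :: "nat set" and Q :: "(nat \<Rightarrow> nat) \<Rightarrow> (nat \<Rightarrow> nat) \<Rightarrow> complex"
  defines "K \<equiv> embed_op (Suc n) S Q"
  assumes "S \<subseteq> {..<Suc n}" and "psd_kernel d (Suc n) K"
    and "orthonormal1 d w" and "orthonormal_n d n v"
    and "\<forall>x\<in>basis d (Suc n). \<psi> x = (\<Sum>j<d. of_real (\<alpha> j) * tensor (w j) (v j) x)"
  shows "sesq_form d (Suc n) K \<psi> \<psi> \<le> of_nat d ^ (card S - 1 - (card (tail_qudits S) - 1)) *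
      (\<Sum>j<d. of_real ((\<alpha> j)\<^sup>2) * sesq_form d (Suc n) K (tensor (w j) (v j)) (tensor (w j) (v j)))"
proof -
  have "finite S"
    using assms(2) finite_subset by blast
  then have card_tail: "card (tail_qudits S) = card (S - {0})"
    by (rule card_tail_qudits)
  have "finite (tail_qudits S)"
    using tail_qudits_subset[OF assms(2)] finite_subset by blast
  have cross: "sesq_form d (Suc n) K (tensor (w j) (v j)) (tensor (w j') (v j'))
      = sesq_form d n (embed_op n (tail_qudits S) (contract_first_qudit d S Q (w j) (w j'))) (v j) (v j')" for j j'
    unfolding K_def by (rule sesq_form_embed_op_tensor)
  show ?thesis
  proof (cases "0 \<notin> S \<or> tail_qudits S = {}")
    case True
    have "card S - 1 - (card (tail_qudits S) - 1) = 0"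
      using True card_tail \<open>finite S\<close> by (auto simp: card_Diff_singleton_if)
    moreover have "sesq_form d (Suc n) K (tensor (w j) (v j)) (tensor (w j') (v j')) = 0"
      if "j < d" "j' < d" "j \<noteq> j'" for j j'
    proof (cases "0 \<in> S")
      case True
      with \<open>0 \<notin> S \<or> tail_qudits S = {}\<close> show ?thesis
        using assms(5) that unfolding cross orthonormal_n_def by (simp add: sesq_form_embed_op_empty)
    next
      case False
      then have "contract_first_qudit d S Q (w j) (w j') = (\<lambda>g h. 0)"
        using assms(4) that unfolding contract_first_qudit_def orthonormal1_def by simp
      then have "sesq_form d (Suc n) K (tensor (w j) (v j)) (tensor (w j') (v j'))
          = sesq_form d n (embed_op n (tail_qudits S) (\<lambda>g h. 0)) (v j) (v j')"
        unfolding cross by simp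
      also have "\<dots> = 0"
        unfolding embed_op_def sesq_form_def by simp
      finally show ?thesis .
    qed
    ultimately show ?thesis
      using sesq_form_orthogonal_expand[OF assms(6)] by simp
  next
    case False
    then have "card S - 1 - (card (tail_qudits S) - 1) = 1"
      using card_tail \<open>finite S\<close> \<open>finite (tail_qudits S)\<close> card_gt_0_iff[of "tail_qudits S"]
      by (auto simp: card_Diff_singleton_if)
    then show ?thesis
      using sesq_form_pinching[OF assms(3,6)] by simp
  qed
qed

lemma rsd_expectation_le:
  assumes "rsd d n \<psi> c \<phi>" and "S \<subseteq> {..<n}" and "psd_kernel d n (embed_op n S Q)"
  shows "sesq_form d n (embed_op n S Q) \<psi> \<psi>
    \<le> of_nat d ^ (card S - 1) * mixture_form d n c \<phi> (embed_op n S Q)"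
  using assms
proof (induction arbitrary: S Q rule: rsd.induct)
  case (base c \<phi> v)
  have "sesq_form d 1 (embed_op 1 S Q) v v \<le> of_nat d ^ (card S - 1) * sesq_form d 1 (embed_op 1 S Q) v v"
  proof (cases "d = 0")
    case True
    then show ?thesis
      unfolding sesq_form_def by (simp add: basis_Suc)
  next
    case False
    then have "1 * sesq_form d 1 (embed_op 1 S Q) v v \<le> of_nat d ^ (card S - 1) * sesq_form d 1 (embed_op 1 S Q) v v"
      using base.prems(2) unfolding psd_kernel_def
      by (intro mult_right_mono) (auto simp: less_eq_complex_def)
    then show ?thesis
      by simp
  qed
  then show ?case
    using base.hyps by (simp add: mixture_form_def basis_0)
next
  case (step n \<alpha> w v \<psi> cs \<phi>s c \<phi>)
  define S' where "S' = tail_qudits S"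
  define K' where "K' j = embed_op n S' (contract_first_qudit d S Q (w j) (w j))" for j
  have reduce: "sesq_form d (Suc n) (embed_op (Suc n) S Q) (tensor (w j) x) (tensor (w j) y)
      = sesq_form d n (K' j) x y" for j x y
    unfolding K'_def S'_def by (rule sesq_form_embed_op_tensor)
  have S'_sub: "S' \<subseteq> {..<n}"
    unfolding S'_def using step.prems(1) by (rule tail_qudits_subset)
  have psd: "psd_kernel d n (K' j)" for j
    using step.prems(2) unfolding psd_kernel_def reduce[symmetric] by blast
  have IH: "sesq_form d n (K' j) (v j) (v j) \<le> of_nat d ^ (card S' - 1) * mixture_form d n (cs j) (\<phi>s j) (K' j)"
    if "j < d" for j
    using step.IH[rule_format, OF that] S'_sub psd unfolding K'_def by blast
  have "card S' \<le> card S"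
    unfolding S'_def using step.prems(1) card_tail_qudits[of S] finite_subset card_Diff1_le[of S 0]
    by (metis finite_lessThan)
  then have exponent: "card S - 1 - (card S' - 1) + (card S' - 1) = card S - 1"
    by simp
  have "sesq_form d (Suc n) (embed_op (Suc n) S Q) \<psi> \<psi>
      \<le> of_nat d ^ (card S - 1 - (card S' - 1)) * (\<Sum>j<d. of_real ((\<alpha> j)\<^sup>2) * sesq_form d n (K' j) (v j) (v j))"
    unfolding S'_def reduce[symmetric] using step.hyps step.prems by (intro rsd_step_bound) auto
  also have "\<dots> \<le> of_nat d ^ (card S - 1 - (card S' - 1)) *
      (\<Sum>j<d. of_real ((\<alpha> j)\<^sup>2) * (of_nat d ^ (card S' - 1) * mixture_form d n (cs j) (\<phi>s j) (K' j)))"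
    using IH by (intro mult_left_mono sum_mono) (auto simp: less_eq_complex_def)
  also have "\<dots> = of_nat d ^ (card S - 1 - (card S' - 1)) * of_nat d ^ (card S' - 1) *
      (\<Sum>j<d. of_real ((\<alpha> j)\<^sup>2) * mixture_form d n (cs j) (\<phi>s j) (K' j))"
    by (simp add: sum_distrib_left mult_ac)
  also have "\<dots> = of_nat d ^ (card S - 1) * (\<Sum>j<d. of_real ((\<alpha> j)\<^sup>2) * mixture_form d n (cs j) (\<phi>s j) (K' j))"
    by (simp only: power_add[symmetric] exponent)
  also have "\<dots> = of_nat d ^ (card S - 1) * mixture_form d (Suc n) c \<phi> (embed_op (Suc n) S Q)"
    using mixture_form_Suc[of n d c \<alpha> cs \<phi> w \<phi>s "embed_op (Suc n) S Q" K'] step.hyps reduce by simp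
  finally show ?case .
qed

lemma trace_prod_rsd_mixture: "trace_prod d n E (rsd_mixture d n c \<phi>) = mixture_form d n c \<phi> E"
proof -
  have "trace_prod d n E (rsd_mixture d n c \<phi>) = (\<Sum>x\<in>basis d n. \<Sum>y\<in>basis d n. \<Sum>i\<in>basis d (n - 1).
      of_real ((c i)\<^sup>2) * (cnj (\<phi> i x) * E x y * \<phi> i y))"
    unfolding trace_prod_def rsd_mixture_def ketbra_def
    by (intro sum.cong refl) (simp add: sum_distrib_left mult_ac)
  also have "\<dots> = (\<Sum>i\<in>basis d (n - 1). \<Sum>x\<in>basis d n. \<Sum>y\<in>basis d n.
      of_real ((c i)\<^sup>2) * (cnj (\<phi> i x) * E x y * \<phi> i y))"
    by (subst sum.swap) (intro sum.cong refl sum.swap)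
  finally show ?thesis
    unfolding mixture_form_def sesq_form_def by (simp only: sum_distrib_left)
qed

lemma trace_prod_ketbra: "trace_prod d n E (ketbra \<psi> \<psi>) = sesq_form d n E \<psi> \<psi>"
  unfolding trace_prod_def ketbra_def sesq_form_def by (simp add: mult_ac)

lemma rsd_qudits_pos: "rsd d n \<psi> c \<phi> \<Longrightarrow> 0 < n"
  by (erule rsd.cases) auto

lemma complex_divide_le_of_le_mult:
  fixes B M :: complex and D :: real
  assumes "0 < D" and "B \<le> of_real D * M"
  shows "B / of_real D \<le> M"
  using assms by (simp add: less_eq_complex_def pos_divide_le_eq mult.commute)

theorem theorem4:
  fixes d n k :: nat and \<psi> :: "nat list \<Rightarrow> complex" and c :: "nat list \<Rightarrow> real"
    and \<phi> :: "nat list \<Rightarrow> nat list \<Rightarrow> complex" and S :: "nat set"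
    and Q :: "(nat \<Rightarrow> nat) \<Rightarrow> (nat \<Rightarrow> nat) \<Rightarrow> complex"
  assumes "inner_n d n \<psi> \<psi> = 1"
    and "rsd d n \<psi> c \<phi>"
    and "S \<subseteq> {..<n}"
    and "card S = k"
    and "local_projector d S Q"
  shows "trace_prod d n (embed_op n S Q) (rsd_mixture d n c \<phi>)
         \<ge> trace_prod d n (embed_op n S Q) (ketbra \<psi> \<psi>) / of_nat d ^ (k - 1)"
proof -
  obtain m where "n = Suc m"
    using rsd_qudits_pos[OF assms(2)] gr0_conv_Suc by blast
  moreover have "basis d n \<noteq> {}"
    using assms(1) unfolding inner_n_def by auto
  ultimately have "0 < d"
    by (auto simp: basis_Suc)
  moreover have "sesq_form d n (embed_op n S Q) \<psi> \<psi>
      \<le> of_real (real d ^ (k - 1)) * mixture_form d n c \<phi> (embed_op n S Q)"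
    using rsd_expectation_le[OF assms(2,3) psd_kernel_embed_op[OF assms(5,3)]] assms(4) by simp
  ultimately show ?thesis
    unfolding trace_prod_rsd_mixture trace_prod_ketbra
    using complex_divide_le_of_le_mult[of "real d ^ (k - 1)"] by simp
qed

end
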